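(* Assume there is $\alpha_l\in\mathcal{K}_\infty$ with $\alpha_l(|x|)\le\inf_{u\in\mathbb{R}^m}l(x,u)$ for all $x\in\mathbb{R}^n$. Assume all finite-horizon infima below are attained, and that there exist $\underline N\in\mathbb{N}$ and $\alpha\in(0,1]$ such that for every horizon $M\ge\underline N$, every $x\in\mathbb{R}^n$ and every optimal sequence $u^\ast(\cdot;x)$ for $V_M(x)$, $$V_M\big(f(x,u^\ast(0;x))\big)+\alpha\, l(x,u^\ast(0;x))\le V_M(x).$$ Let $N\ge\underline N$, let $\hat V^0\equiv 0$ and let $\hat V^{i}$ be generated by the recursion $\hat V^{i+1}(x)=\inf_{u(\cdot;x)}\sum_{k=0}^{N-1}l(x_u(k;x),u(k;x))+\hat V^i(x_u(N;x))$. Take terminal costs $F^i=\hat V^i$. Then for every $i\in\mathbb{N}_0$ and every $x\in\mathbb{R}^n$, $$\mathcal{V}_N\big(f(x,\kappa_N(x,i)),i\big)\le \mathcal{V}_N(x,i)-\alpha\,\alpha_l(|x|).$$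
   Context: Dynamics $x^+=f(x,u)$, $f$ continuous, $f(0,0)=0$; $x_u(k;x)$ is the state trajectory from $x$ under the input sequence $u(\cdot;x)$. Stage cost $l\ge0$ positive definite. $V_M(x)=\inf_{u(\cdot;x)\in\mathbb{R}^{m\times M}}\sum_{k=0}^{M-1}l(x_u(k;x),u(k;x))$ is the optimal $M$-horizon cost without terminal cost. For a sequence of positive definite terminal costs $F^i:\mathbb{R}^n\to\mathbb{R}_{\ge0}$, $\mathcal{V}_N(x,i)=\inf_{u(\cdot;x)\in\mathbb{R}^{m\times N}}\sum_{k=0}^{N-1}l(x_u(k;x),u(k;x))+F^i(x_u(N;x))$, and $\kappa_N(x,i)=u^\ast(0;x,i)$ is the first element of an optimizing sequence of this problem. $\mathcal{K}_\infty$: continuous, zero at zero, strictly increasing, unbounded functions $\mathbb{R}_{\ge0}\to\mathbb{R}_{\ge0}$. *)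

theory Defs
  imports "HOL-Analysis.Analysis"
begin

text \<open>State trajectory x_u(k;x) of x+ = f(x,u) from x under input sequence u.
  Input sequences are functions nat => input; only the first M entries matter.\<close>
fun traj :: "('a \<Rightarrow> 'b \<Rightarrow> 'a) \<Rightarrow> 'a \<Rightarrow> (nat \<Rightarrow> 'b) \<Rightarrow> nat \<Rightarrow> 'a" where
  "traj f x u 0 = x"
| "traj f x u (Suc k) = f (traj f x u k) (u k)"

definition cost :: "('a \<Rightarrow> 'b \<Rightarrow> real) \<Rightarrow> ('a \<Rightarrow> 'b \<Rightarrow> 'a) \<Rightarrow> nat \<Rightarrow> 'a \<Rightarrow> (nat \<Rightarrow> 'b) \<Rightarrow> real" where
  "cost l f M x u = (\<Sum>k<M. l (traj f x u k) (u k))"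

definition V :: "('a \<Rightarrow> 'b \<Rightarrow> real) \<Rightarrow> ('a \<Rightarrow> 'b \<Rightarrow> 'a) \<Rightarrow> nat \<Rightarrow> 'a \<Rightarrow> real" where
  "V l f M x = (INF u. cost l f M x u)"

definition costT :: "('a \<Rightarrow> 'b \<Rightarrow> real) \<Rightarrow> ('a \<Rightarrow> 'b \<Rightarrow> 'a) \<Rightarrow> nat \<Rightarrow> ('a \<Rightarrow> real) \<Rightarrow> 'a \<Rightarrow> (nat \<Rightarrow> 'b) \<Rightarrow> real" where
  "costT l f N F x u = cost l f N x u + F (traj f x u N)"

definition VT :: "('a \<Rightarrow> 'b \<Rightarrow> real) \<Rightarrow> ('a \<Rightarrow> 'b \<Rightarrow> 'a) \<Rightarrow> nat \<Rightarrow> ('a \<Rightarrow> real) \<Rightarrow> 'a \<Rightarrow> real" where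
  "VT l f N F x = (INF u. costT l f N F x u)"

fun Vhat :: "('a \<Rightarrow> 'b \<Rightarrow> real) \<Rightarrow> ('a \<Rightarrow> 'b \<Rightarrow> 'a) \<Rightarrow> nat \<Rightarrow> nat \<Rightarrow> 'a \<Rightarrow> real" where
  "Vhat l f N 0 = (\<lambda>x. 0)"
| "Vhat l f N (Suc i) = VT l f N (Vhat l f N i)"

definition calV :: "('a \<Rightarrow> 'b \<Rightarrow> real) \<Rightarrow> ('a \<Rightarrow> 'b \<Rightarrow> 'a) \<Rightarrow> nat \<Rightarrow> 'a \<Rightarrow> nat \<Rightarrow> real" where
  "calV l f N x i = VT l f N (Vhat l f N i) x"

definition Kinf :: "(real \<Rightarrow> real) \<Rightarrow> bool" where
  "Kinf a \<longleftrightarrow> continuous_on {0..} a \<and> a 0 = 0 \<and> strict_mono_on {0..} a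
     \<and> (\<forall>c. \<exists>r\<ge>0. c \<le> a r)"

end

theory Submission
  imports Defs
begin

text \<open>By dynamic programming the recursively generated terminal costs are
  \<open>Vhat i = V (i N)\<close>, so the terminal-cost problem at stage \<open>i\<close> is just the
  plain problem with horizon \<open>(i + 1) N \<ge> Nlow\<close>. An optimal sequence of the
  terminal-cost problem, extended by an optimal tail, is optimal for this
  longer horizon and has the same first element; the assumed decrease of
  \<open>V\<close> along optimal sequences together with \<open>\<alpha>l |x| \<le> l(x, u)\<close> gives the claim.\<close>

lemma traj_add: "traj f x w (N + k) = traj f (traj f x w N) (\<lambda>k. w (N + k)) k"
  by (induction k) auto

lemma cost_add:
  "cost l f (N + K) x w = cost l f N x w + cost l f K (traj f x w N) (\<lambda>k. w (N + k))"
  unfolding cost_def by (induction K) (simp_all add: traj_add)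

definition splice :: "nat \<Rightarrow> (nat \<Rightarrow> 'b) \<Rightarrow> (nat \<Rightarrow> 'b) \<Rightarrow> nat \<Rightarrow> 'b" where
  "splice N u v = (\<lambda>k. if k < N then u k else v (k - N))"

lemma splice_less: "k < N \<Longrightarrow> splice N u v k = u k"
  by (simp add: splice_def)

lemma traj_splice: "k \<le> N \<Longrightarrow> traj f x (splice N u v) k = traj f x u k"
  by (induction k) (auto simp: splice_def)

lemma cost_splice: "cost l f N x (splice N u v) = cost l f N x u"
  unfolding cost_def by (intro sum.cong refl) (simp add: traj_splice splice_less)

lemma cost_add_splice:
  "cost l f (N + K) x (splice N u v) = cost l f N x u + cost l f K (traj f x u N) v"
proof -
  have "(\<lambda>k. splice N u v (N + k)) = v"
    by (simp add: splice_def)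
  then show ?thesis
    using cost_add[of l f N K x "splice N u v"] by (simp only: cost_splice traj_splice[OF order_refl])
qed

lemma cost_nonneg: "(\<And>x u. l x u \<ge> 0) \<Longrightarrow> cost l f M x u \<ge> 0"
  unfolding cost_def by (simp add: sum_nonneg)

lemma V_le_cost: "(\<And>x u. l x u \<ge> 0) \<Longrightarrow> V l f M x \<le> cost l f M x u"
  unfolding V_def by (rule cINF_lower) (auto intro!: bdd_belowI[of _ 0] cost_nonneg)

lemma V_nonneg: "(\<And>x u. l x u \<ge> 0) \<Longrightarrow> V l f M x \<ge> 0"
  unfolding V_def by (rule cINF_greatest) (auto intro: cost_nonneg)

lemma V_0: "V l f 0 x = 0"
  by (simp add: V_def cost_def)

lemma VT_le_costT:
  assumes "\<And>x u. l x u \<ge> 0" and "\<And>y. F y \<ge> 0"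
  shows "VT l f N F x \<le> costT l f N F x u"
  unfolding VT_def using assms
  by (intro cINF_lower) (auto intro!: bdd_belowI[of _ 0] add_nonneg_nonneg cost_nonneg simp: costT_def)

lemma VT_V_eq_V_add:
  assumes nonneg: "\<And>x u. l x u \<ge> 0"
    and attained: "\<And>y. \<exists>v. cost l f K y v = V l f K y"
  shows "VT l f N (V l f K) x = V l f (N + K) x"
proof (rule antisym)
  show "VT l f N (V l f K) x \<le> V l f (N + K) x"
    unfolding V_def[of l f "N + K"]
  proof (rule cINF_greatest)
    fix w
    have "VT l f N (V l f K) x \<le> costT l f N (V l f K) x w"
      by (rule VT_le_costT) (simp_all add: nonneg V_nonneg)
    also have "\<dots> \<le> cost l f (N + K) x w"
      unfolding costT_def cost_add using V_le_cost[OF nonneg] by (simp add: add_left_mono)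
    finally show "VT l f N (V l f K) x \<le> cost l f (N + K) x w" .
  qed simp
next
  show "V l f (N + K) x \<le> VT l f N (V l f K) x"
    unfolding VT_def
  proof (rule cINF_greatest)
    fix u
    obtain v where "cost l f K (traj f x u N) v = V l f K (traj f x u N)"
      using attained by blast
    then have "costT l f N (V l f K) x u = cost l f (N + K) x (splice N u v)"
      by (simp add: cost_add_splice costT_def)
    then show "V l f (N + K) x \<le> costT l f N (V l f K) x u"
      by (simp add: V_le_cost[OF nonneg])
  qed simp
qed

lemma Vhat_eq_V_mult:
  assumes "\<And>x u. l x u \<ge> 0"
    and "\<And>i y. \<exists>v. cost l f (i * N) y v = V l f (i * N) y"
  shows "Vhat l f N i = V l f (i * N)"
proof (induction i)
  case 0
  then show ?case by (simp add: V_0 fun_eq_iff)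
next
  case (Suc i)
  show ?case using VT_V_eq_V_add[OF assms, of N i] by (simp add: Suc.IH fun_eq_iff)
qed

lemma costT_optimal_extends:
  assumes nonneg: "\<And>x u. l x u \<ge> 0"
    and attained: "\<And>y. \<exists>v. cost l f K y v = V l f K y"
    and opt: "costT l f N (V l f K) x u = VT l f N (V l f K) x"
  obtains v where "cost l f (N + K) x (splice N u v) = V l f (N + K) x"
proof -
  obtain v where "cost l f K (traj f x u N) v = V l f K (traj f x u N)"
    using attained by blast
  then have "cost l f (N + K) x (splice N u v) = costT l f N (V l f K) x u"
    by (simp add: cost_add_splice costT_def)
  with opt VT_V_eq_V_add[OF nonneg attained] show thesis
    using that by simp
qed

lemma INF_le_value:
  fixes g :: "'b \<Rightarrow> real"
  assumes "\<And>u. g u \<ge> 0"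
  shows "(INF u. g u) \<le> g u"
  using assms by (intro cINF_lower) (auto intro!: bdd_belowI[of _ 0])

theorem proposition3:
  fixes f :: "real^'n \<Rightarrow> real^'m \<Rightarrow> real^'n"
    and l :: "real^'n \<Rightarrow> real^'m \<Rightarrow> real"
    and \<alpha>l :: "real \<Rightarrow> real"
    and Nlow N :: nat and \<alpha> :: real
  assumes f_cont: "continuous_on UNIV (\<lambda>(x, u). f x u)"
    and f_zero: "f 0 0 = 0"
    and l_nonneg: "\<And>x u. l x u \<ge> 0"
    and l_zero: "l 0 0 = 0"
    and l_pos: "\<And>x u. (x, u) \<noteq> (0, 0) \<Longrightarrow> l x u > 0"
    and \<alpha>l_Kinf: "Kinf \<alpha>l"
    and \<alpha>l_bound: "\<And>x. \<alpha>l (norm x) \<le> (INF u. l x u)"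
    and V_attained: "\<And>M x. M \<ge> Nlow \<Longrightarrow> \<exists>u. cost l f M x u = V l f M x"
    and VT_attained: "\<And>i x. \<exists>u. costT l f N (Vhat l f N i) x u = VT l f N (Vhat l f N i) x"
    and \<alpha>_pos: "0 < \<alpha>" and \<alpha>_le1: "\<alpha> \<le> 1"
    and decrease: "\<And>M x u. M \<ge> Nlow \<Longrightarrow> cost l f M x u = V l f M x \<Longrightarrow>
                     V l f M (f x (u 0)) + \<alpha> * l x (u 0) \<le> V l f M x"
    and N_ge: "N \<ge> Nlow"
  shows "\<forall>i x u. costT l f N (Vhat l f N i) x u = VT l f N (Vhat l f N i) x \<longrightarrow>
           calV l f N (f x (u 0)) i \<le> calV l f N x i - \<alpha> * \<alpha>l (norm x)"
proof (intro allI impI)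
  fix i x u
  assume opt: "costT l f N (Vhat l f N i) x u = VT l f N (Vhat l f N i) x"
  have attained: "\<exists>v. cost l f (j * N) y v = V l f (j * N) y" for j y
    using V_attained[of "j * N"] N_ge by (cases j) (auto simp: V_0 cost_def)
  \<comment> \<open>The decrease hypothesis fails at horizon 0, so \<open>N > 0\<close> and a spliced sequence starts with \<open>u 0\<close>.\<close>
  have N_pos: "0 < N"
  proof (rule ccontr)
    assume "\<not> 0 < N"
    with N_ge have "\<alpha> * l 1 0 \<le> 0"
      using decrease[of 0 1 "\<lambda>_. 0"] by (simp add: V_0 cost_def)
    moreover have "0 < l 1 (0 :: real^'m)"
      by (rule l_pos) simp
    ultimately show False
      using \<alpha>_pos mult_pos_pos by (metis not_le)
  qed
  have calV_eq: "calV l f N y i = V l f (N + i * N) y" for y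
    unfolding calV_def Vhat_eq_V_mult[OF l_nonneg attained]
    by (rule VT_V_eq_V_add[OF l_nonneg attained])
  obtain v where "cost l f (N + i * N) x (splice N u v) = V l f (N + i * N) x"
    using costT_optimal_extends[OF l_nonneg attained] opt
    unfolding Vhat_eq_V_mult[OF l_nonneg attained] by blast
  from decrease[OF _ this] N_ge N_pos
  have "V l f (N + i * N) (f x (u 0)) + \<alpha> * l x (u 0) \<le> V l f (N + i * N) x"
    by (simp add: splice_less)
  moreover have "\<alpha> * \<alpha>l (norm x) \<le> \<alpha> * l x (u 0)"
    using order_trans[OF \<alpha>l_bound INF_le_value[of "l x", OF l_nonneg]] \<alpha>_pos by simp
  ultimately show "calV l f N (f x (u 0)) i \<le> calV l f N x i - \<alpha> * \<alpha>l (norm x)"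
    by (simp add: calV_eq)
qed

end
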